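(* Let $A$ and $B$ be self-adjoint operators on the same complex Hilbert space, with $B$ bounded, non-negative and $B\neq 0$, and suppose that $0\in\rho(A)$ and $BA^{-1}B=0$ (equivalently, $0\in\rho(A+tB)$ for all $t\in\mathbb{R}$). Then $A^{-1}BA^{-1} \neq 0$ and $$\frac{1}{|t|\,\|A^{-1}BA^{-1}\|+\|A^{-1}\|} \le \operatorname{dist}\bigl(0,\sigma(A+tB)\bigr) \le \frac{1}{|t|\,\|A^{-1}BA^{-1}\|-\|A^{-1}\|}$$ for all $t \in \mathbb{R}$ with $|t| > \|A^{-1}\| / \|A^{-1}BA^{-1}\|$.
   Context: $\sigma(T)$ and $\rho(T)$ denote the spectrum and resolvent set of an operator $T$. $A$ may be unbounded. *)

theory Defs
  imports "HOL-Analysis.Analysis"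
begin

class chilbert = real_normed_vector + complete_space +
  fixes scaleC :: "complex \<Rightarrow> 'a \<Rightarrow> 'a" (infixr \<open>*\<^sub>C\<close> 75)
    and cinner :: "'a \<Rightarrow> 'a \<Rightarrow> complex"
  assumes scaleC_add_right: "a *\<^sub>C (x + y) = a *\<^sub>C x + a *\<^sub>C y"
    and scaleC_add_left: "(a + b) *\<^sub>C x = a *\<^sub>C x + b *\<^sub>C x"
    and scaleC_scaleC: "a *\<^sub>C (b *\<^sub>C x) = (a * b) *\<^sub>C x"
    and scaleC_one: "1 *\<^sub>C x = x"
    and scaleR_scaleC: "r *\<^sub>R x = complex_of_real r *\<^sub>C x"
    and cinner_commute: "cinner x y = cnj (cinner y x)"
    and cinner_add_right: "cinner x (y + z) = cinner x y + cinner x z"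
    and cinner_scaleC_right: "cinner x (a *\<^sub>C y) = a * cinner x y"
    and cinner_ge_zero: "0 \<le> Re (cinner x x)"
    and cinner_eq_zero_iff: "cinner x x = 0 \<longleftrightarrow> x = 0"
    and norm_eq_sqrt_cinner: "norm x = sqrt (Re (cinner x x))"

text \<open>A (possibly unbounded) operator is a pair of a domain D and a map T, meaningful on D.\<close>

definition clinear_on :: "'a::chilbert set \<Rightarrow> ('a \<Rightarrow> 'a) \<Rightarrow> bool" where
  "clinear_on D T \<longleftrightarrow>
     0 \<in> D \<and> (\<forall>x\<in>D. \<forall>y\<in>D. x + y \<in> D) \<and> (\<forall>c. \<forall>x\<in>D. c *\<^sub>C x \<in> D) \<and>
     (\<forall>x\<in>D. \<forall>y\<in>D. T (x + y) = T x + T y) \<and> (\<forall>c. \<forall>x\<in>D. T (c *\<^sub>C x) = c *\<^sub>C T x)"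

definition bounded_clinear_op :: "('a::chilbert \<Rightarrow> 'a) \<Rightarrow> bool" where
  "bounded_clinear_op T \<longleftrightarrow> clinear_on UNIV T \<and> (\<exists>K. \<forall>x. norm (T x) \<le> norm x * K)"

text \<open>Self-adjointness of a densely defined operator: \<open>T\<^sup>* = T\<close> including domains,
  where \<open>y \<in> dom T\<^sup>*\<close> with \<open>T\<^sup>* y = z\<close> iff \<open>\<langle>T x, y\<rangle> = \<langle>x, z\<rangle>\<close> for all \<open>x \<in> D\<close>.\<close>

definition self_adjoint_op :: "'a::chilbert set \<Rightarrow> ('a \<Rightarrow> 'a) \<Rightarrow> bool" where
  "self_adjoint_op D T \<longleftrightarrow> clinear_on D T \<and> closure D = UNIV \<and>
     (\<forall>y z. (\<forall>x\<in>D. cinner (T x) y = cinner x z) \<longleftrightarrow> (y \<in> D \<and> z = T y))"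

definition resolvent_set :: "'a::chilbert set \<Rightarrow> ('a \<Rightarrow> 'a) \<Rightarrow> complex set" where
  "resolvent_set D T = {z. bij_betw (\<lambda>x. T x - z *\<^sub>C x) D UNIV \<and>
      bounded_clinear_op (inv_into D (\<lambda>x. T x - z *\<^sub>C x))}"

definition spectrum_op :: "'a::chilbert set \<Rightarrow> ('a \<Rightarrow> 'a) \<Rightarrow> complex set" where
  "spectrum_op D T = - resolvent_set D T"

end

theory Submission
  imports Defs
begin

text \<open>Put \<open>R = A\<^sup>-\<^sup>1\<close>. Since \<open>B R B = 0\<close>, the operator \<open>R B\<close> squares to zero, so
  \<open>A + t B = A (I + t R B)\<close> has the bounded Hermitian inverse \<open>S\<^sub>t = R - t R B R\<close>.
  For a bounded Hermitian \<open>S\<close> with inverse \<open>T\<close> one has \<open>dist(0, \<sigma>(T)) = 1 / \<parallel>S\<parallel>\<close>: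
  if \<open>|z| \<parallel>S\<parallel> < 1\<close> then \<open>T - z = (I - z S) T\<close> is invertible by the contraction principle,
  while \<open>\<plusminus>\<parallel>S\<parallel>\<close> is an approximate eigenvalue of \<open>S\<close> (the spectral radius of a Hermitian
  operator is its norm), which puts \<open>\<plusminus>1 / \<parallel>S\<parallel>\<close> into \<open>\<sigma>(T)\<close>. The bounds then come from
  \<open>|t| \<parallel>R B R\<parallel> - \<parallel>R\<parallel> \<le> \<parallel>S\<^sub>t\<parallel> \<le> |t| \<parallel>R B R\<parallel> + \<parallel>R\<parallel>\<close>, and \<open>R B R \<noteq> 0\<close> because otherwise
  \<open>B\<close> would vanish on the dense domain of \<open>A\<close>.\<close>

lemma scaleC_zero_left [simp]: "(0 :: complex) *\<^sub>C (x :: 'a::chilbert) = 0"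
  using scaleC_add_left[of 0 0 x] by simp

lemma scaleC_zero_right [simp]: "c *\<^sub>C (0 :: 'a::chilbert) = 0"
  using scaleC_add_right[of c 0 0] by simp

lemma scaleC_minus_right: "c *\<^sub>C (- x :: 'a::chilbert) = - (c *\<^sub>C x)"
  using scaleC_add_right[of c "- x" x] by (simp add: eq_neg_iff_add_eq_0)

lemma scaleC_diff_right: "c *\<^sub>C (x - y :: 'a::chilbert) = c *\<^sub>C x - c *\<^sub>C y"
  by (simp only: diff_conv_add_uminus scaleC_add_right scaleC_minus_right)

lemma scaleC_left_commute: "a *\<^sub>C (b *\<^sub>C (x :: 'a::chilbert)) = b *\<^sub>C (a *\<^sub>C x)"
  by (simp add: scaleC_scaleC mult.commute)

lemma cinner_add_left: "cinner (x + y) (z :: 'a::chilbert) = cinner x z + cinner y z"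
  by (metis cinner_add_right cinner_commute complex_cnj_add)

lemma cinner_scaleC_left: "cinner (a *\<^sub>C x) (y :: 'a::chilbert) = cnj a * cinner x y"
  by (metis cinner_commute cinner_scaleC_right complex_cnj_mult)

lemma cinner_minus_left: "cinner (- x) (y :: 'a::chilbert) = - cinner x y"
  by (metis add_cancel_right_right add.right_inverse cinner_add_left eq_neg_iff_add_eq_0)

lemma cinner_minus_right: "cinner y (- x :: 'a::chilbert) = - cinner y x"
  by (metis add_cancel_right_right add.right_inverse cinner_add_right eq_neg_iff_add_eq_0)

lemma cinner_diff_left: "cinner (x - y) (z :: 'a::chilbert) = cinner x z - cinner y z"
  by (simp only: diff_conv_add_uminus cinner_add_left cinner_minus_left)

lemma cinner_diff_right: "cinner z (x - y :: 'a::chilbert) = cinner z x - cinner z y"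
  by (simp only: diff_conv_add_uminus cinner_add_right cinner_minus_right)

lemma cinner_self_eq_norm_power2: "cinner x (x :: 'a::chilbert) = complex_of_real ((norm x)\<^sup>2)"
proof -
  have "Im (cinner x x) = 0"
    by (metis cinner_commute cnj.simps(2) neg_equal_zero)
  moreover have "Re (cinner x x) = (norm x)\<^sup>2"
    using norm_eq_sqrt_cinner[of x] cinner_ge_zero[of x] by simp
  ultimately show ?thesis
    by (simp add: complex_eq_iff)
qed

lemma norm_scaleC: "norm (c *\<^sub>C (x :: 'a::chilbert)) = cmod c * norm x"
proof -
  have "cinner (c *\<^sub>C x) (c *\<^sub>C x) = cnj c * c * cinner x x"
    by (simp add: cinner_scaleC_left cinner_scaleC_right)
  also have "cnj c * c = complex_of_real ((cmod c)\<^sup>2)"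
    by (metis complex_norm_square mult.commute)
  finally have "Re (cinner (c *\<^sub>C x) (c *\<^sub>C x)) = (cmod c)\<^sup>2 * Re (cinner x x)"
    by simp
  then show ?thesis
    using norm_eq_sqrt_cinner[of x] norm_eq_sqrt_cinner[of "c *\<^sub>C x"]
    by (simp add: real_sqrt_mult)
qed

lemma norm_diff_power2:
  "(norm (u - v :: 'a::chilbert))\<^sup>2 = (norm u)\<^sup>2 - 2 * Re (cinner u v) + (norm v)\<^sup>2"
proof -
  have "cinner (u - v) (u - v) = cinner u u - cinner u v - cinner v u + cinner v v"
    by (simp add: cinner_diff_left cinner_diff_right)
  moreover have "Re (cinner v u) = Re (cinner u v)"
    using cinner_commute[of v u] by simp
  ultimately have "Re (cinner (u - v) (u - v))
      = Re (cinner u u) - 2 * Re (cinner u v) + Re (cinner v v)"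
    by simp
  then show ?thesis
    by (simp add: cinner_self_eq_norm_power2)
qed

lemma linear_scaleC_right: "linear (\<lambda>x :: 'a::chilbert. c *\<^sub>C x)"
  by (rule linearI) (simp_all add: scaleC_add_right scaleR_scaleC scaleC_left_commute)

definition hermitian_op :: "('a::chilbert \<Rightarrow> 'a) \<Rightarrow> bool" where
  "hermitian_op S \<longleftrightarrow> (\<forall>x y. cinner (S x) y = cinner x (S y))"

definition two_sided_inverse_on :: "'a set \<Rightarrow> ('a \<Rightarrow> 'b) \<Rightarrow> ('b \<Rightarrow> 'a) \<Rightarrow> bool" where
  "two_sided_inverse_on D T S \<longleftrightarrow>
     (\<forall>y. S y \<in> D) \<and> (\<forall>y. T (S y) = y) \<and> (\<forall>x\<in>D. S (T x) = x)"

lemma hermitian_op_diff: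
  "hermitian_op S \<Longrightarrow> hermitian_op S' \<Longrightarrow> hermitian_op (\<lambda>x. S x - S' x)"
  by (simp add: hermitian_op_def cinner_diff_left cinner_diff_right)

lemma hermitian_op_scaleR: "hermitian_op S \<Longrightarrow> hermitian_op (\<lambda>x. r *\<^sub>R S x)"
  by (simp add: hermitian_op_def scaleR_scaleC cinner_scaleC_left cinner_scaleC_right)

lemma hermitian_op_if_self_adjoint_op_UNIV: "self_adjoint_op UNIV B \<Longrightarrow> hermitian_op B"
  unfolding self_adjoint_op_def hermitian_op_def by blast

lemma self_adjoint_op_cinner_commute:
  assumes "self_adjoint_op D A" and "x \<in> D" and "y \<in> D"
  shows "cinner (A x) y = cinner x (A y)"
  using assms unfolding self_adjoint_op_def by blast

lemma hermitian_op_inverse_of_self_adjoint_op: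
  assumes "self_adjoint_op D A" and "two_sided_inverse_on D A R"
  shows "hermitian_op R"
  using assms self_adjoint_op_cinner_commute[OF assms(1)]
  unfolding hermitian_op_def two_sided_inverse_on_def by metis

lemma two_sided_inverse_on_inv_into:
  "bij_betw T D UNIV \<Longrightarrow> two_sided_inverse_on D T (inv_into D T)"
  unfolding two_sided_inverse_on_def bij_betw_def
  by (auto intro: inv_into_into f_inv_into_f inv_into_f_f)

lemma bounded_linear_if_bounded_clinear_op: "bounded_clinear_op T \<Longrightarrow> bounded_linear T"
  unfolding bounded_clinear_op_def clinear_on_def
  by (metis UNIV_I bounded_linear_intro scaleR_scaleC)

lemma zero_in_resolvent_setD:
  assumes "0 \<in> resolvent_set D A"
  shows "two_sided_inverse_on D A (inv_into D A)" and "bounded_linear (inv_into D A)"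
proof -
  have "bij_betw A D UNIV" and "bounded_clinear_op (inv_into D A)"
    using assms by (simp_all add: resolvent_set_def)
  then show "two_sided_inverse_on D A (inv_into D A)" and "bounded_linear (inv_into D A)"
    by (simp_all add: two_sided_inverse_on_inv_into bounded_linear_if_bounded_clinear_op)
qed

lemma clinear_on_add_scaleC:
  "clinear_on D A \<Longrightarrow> clinear_on UNIV B \<Longrightarrow> clinear_on D (\<lambda>x. A x + c *\<^sub>C B x)"
  unfolding clinear_on_def by (auto simp: scaleC_add_right scaleC_left_commute[of c])

lemma clinear_on_diff_scaleC: "clinear_on D T \<Longrightarrow> clinear_on D (\<lambda>x. T x - z *\<^sub>C x)"
  unfolding clinear_on_def by (auto simp: scaleC_add_right scaleC_diff_right scaleC_left_commute[of z])

lemma clinear_on_inv_into: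
  assumes lin: "clinear_on D T" and bij: "bij_betw T D UNIV"
  shows "clinear_on UNIV (inv_into D T)"
proof -
  let ?S = "inv_into D T"
  have inv: "two_sided_inverse_on D T ?S"
    using bij by (rule two_sided_inverse_on_inv_into)
  have "?S (x + y) = ?S x + ?S y" for x y
  proof -
    have "T (?S x + ?S y) = x + y" and "?S x + ?S y \<in> D"
      using lin inv unfolding clinear_on_def two_sided_inverse_on_def by simp_all
    then show ?thesis
      using inv unfolding two_sided_inverse_on_def by metis
  qed
  moreover have "?S (c *\<^sub>C x) = c *\<^sub>C ?S x" for c x
  proof -
    have "T (c *\<^sub>C ?S x) = c *\<^sub>C x" and "c *\<^sub>C ?S x \<in> D"
      using lin inv unfolding clinear_on_def two_sided_inverse_on_def by simp_all
    then show ?thesis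
      using inv unfolding two_sided_inverse_on_def by metis
  qed
  ultimately show ?thesis
    by (simp add: clinear_on_def)
qed

section \<open>Approximate eigenvalues\<close>

definition approx_eigenvalue :: "('a::real_normed_vector \<Rightarrow> 'a) \<Rightarrow> real \<Rightarrow> bool" where
  "approx_eigenvalue S l \<longleftrightarrow> (\<forall>e>0. \<exists>y. norm y = 1 \<and> norm (S y - l *\<^sub>R y) < e)"

lemma norm_linear_eq_norm_mult_unit:
  fixes f :: "'a::real_normed_vector \<Rightarrow> 'b::real_normed_vector"
  assumes "linear f" and "x \<noteq> 0"
  shows "norm (f x) = norm x * norm (f (x /\<^sub>R norm x))"
  using assms by (simp add: linear_scale)

lemma onorm_approx_attained:
  fixes S :: "'a::real_normed_vector \<Rightarrow> 'b::real_normed_vector"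
  assumes bl: "bounded_linear S" and d: "0 < d" "d \<le> onorm S"
  shows "\<exists>x. norm x = 1 \<and> onorm S - d < norm (S x)"
proof (rule ccontr)
  assume "\<nexists>x. norm x = 1 \<and> onorm S - d < norm (S x)"
  then have unit: "norm (S u) \<le> onorm S - d" if "norm u = 1" for u
    using that by fastforce
  have "norm (S x) \<le> (onorm S - d) * norm x" for x
  proof (cases "x = 0")
    case False
    then show ?thesis
      using norm_linear_eq_norm_mult_unit[OF bounded_linear.linear[OF bl] False]
        unit[of "x /\<^sub>R norm x"] by (simp add: mult.commute mult_left_mono)
  qed (simp add: linear_0 bounded_linear.linear[OF bl])
  then have "onorm S \<le> onorm S - d"
    using d by (intro onorm_bound) auto
  with d show False
    by simp
qed

text \<open>If \<open>S - s\<close> is bounded below, the factorisation \<open>S\<^sup>2 - s\<^sup>2 = (S - s)(S + s)\<close> transfers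
  approximate eigenvectors of \<open>S\<^sup>2\<close> to \<open>S + s\<close>.\<close>

lemma approx_eigenvalue_of_square:
  fixes S :: "'a::real_normed_vector \<Rightarrow> 'a"
  assumes lin: "linear S" and sq: "approx_eigenvalue (\<lambda>x. S (S x)) (s\<^sup>2)"
  shows "approx_eigenvalue S (- s) \<or> approx_eigenvalue S s"
proof (rule disjCI)
  assume "\<not> approx_eigenvalue S s"
  then obtain c where c: "0 < c" "\<And>u. norm u = 1 \<Longrightarrow> c \<le> norm (S u - s *\<^sub>R u)"
    by (auto simp: approx_eigenvalue_def not_less)
  have lin_shift: "linear (\<lambda>y. S y - s *\<^sub>R y)"
    using lin by (intro linearI) (simp_all add: linear_add linear_scale algebra_simps)
  have lower: "c * norm y \<le> norm (S y - s *\<^sub>R y)" for y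
  proof (cases "y = 0")
    case False
    then show ?thesis
      using norm_linear_eq_norm_mult_unit[OF lin_shift False] c(2)[of "y /\<^sub>R norm y"]
      by (simp add: mult.commute mult_left_mono)
  qed simp
  show "approx_eigenvalue S (- s)"
    unfolding approx_eigenvalue_def
  proof (intro allI impI)
    fix e :: real
    assume "0 < e"
    then obtain x where x: "norm x = 1" "norm (S (S x) - s\<^sup>2 *\<^sub>R x) < c * e"
      using sq c(1) unfolding approx_eigenvalue_def by (meson mult_pos_pos)
    let ?y = "S x + s *\<^sub>R x"
    have "S ?y - s *\<^sub>R ?y = S (S x) - s\<^sup>2 *\<^sub>R x"
      using lin by (simp add: linear_add linear_scale algebra_simps power2_eq_square)
    then have "c * norm ?y < c * e"
      using lower[of ?y] x(2) by simp
    then show "\<exists>y. norm y = 1 \<and> norm (S y - (- s) *\<^sub>R y) < e"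
      using c(1) x(1) by auto
  qed
qed

lemma norm_hermitian_square_diff_power2_le:
  fixes S :: "'a::chilbert \<Rightarrow> 'a"
  assumes bl: "bounded_linear S" and herm: "hermitian_op S" and x: "norm x = 1"
  shows "(norm (S (S x) - (onorm S)\<^sup>2 *\<^sub>R x))\<^sup>2
    \<le> 2 * (onorm S)\<^sup>2 * ((onorm S)\<^sup>2 - (norm (S x))\<^sup>2)"
proof -
  let ?s = "onorm S"
  have "cinner (S (S x)) x = cinner (S x) (S x)"
    using herm by (simp add: hermitian_op_def)
  then have cross: "Re (cinner (S (S x)) (?s\<^sup>2 *\<^sub>R x)) = ?s\<^sup>2 * (norm (S x))\<^sup>2"
    by (simp add: scaleR_scaleC cinner_scaleC_right cinner_self_eq_norm_power2)
  have "norm (S (S x)) \<le> ?s * norm (S x)"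
    using onorm[OF bl] .
  also have "\<dots> \<le> ?s * ?s"
    using onorm[OF bl, of x] x onorm_pos_le[OF bl] by (simp add: mult_left_mono)
  finally have "norm (S (S x)) \<le> ?s\<^sup>2"
    by (simp add: power2_eq_square)
  then have "(norm (S (S x)))\<^sup>2 \<le> (?s\<^sup>2)\<^sup>2"
    using power_mono norm_ge_zero by blast
  then show ?thesis
    using norm_diff_power2[of "S (S x)" "?s\<^sup>2 *\<^sub>R x"] cross x
    by (simp add: algebra_simps power2_eq_square)
qed

lemma hermitian_op_approx_eigenvalue_square:
  fixes S :: "'a::chilbert \<Rightarrow> 'a"
  assumes bl: "bounded_linear S" and herm: "hermitian_op S" and pos: "0 < onorm S"
  shows "approx_eigenvalue (\<lambda>x. S (S x)) ((onorm S)\<^sup>2)"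
  unfolding approx_eigenvalue_def
proof (intro allI impI)
  fix e :: real
  assume e: "0 < e"
  let ?s = "onorm S"
  define d where "d = min ?s (e\<^sup>2 / (4 * ?s ^ 3))"
  have d: "0 < d" "d \<le> ?s"
    using pos e by (simp_all add: d_def)
  have "4 * ?s ^ 3 * d \<le> 4 * ?s ^ 3 * (e\<^sup>2 / (4 * ?s ^ 3))"
    using pos by (intro mult_left_mono) (simp_all add: d_def)
  with pos have d_small: "4 * ?s ^ 3 * d \<le> e\<^sup>2"
    by simp
  obtain x where x: "norm x = 1" "?s - d < norm (S x)"
    using onorm_approx_attained[OF bl d(1,2)] by blast
  have "(?s - d)\<^sup>2 < (norm (S x))\<^sup>2"
    using x d(2) by (intro power_strict_mono) auto
  then have "?s\<^sup>2 - (norm (S x))\<^sup>2 < ?s\<^sup>2 - (?s - d)\<^sup>2"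
    by linarith
  also have "\<dots> \<le> 2 * ?s * d"
    by (simp add: power2_diff)
  finally have "2 * ?s\<^sup>2 * (?s\<^sup>2 - (norm (S x))\<^sup>2) < 2 * ?s\<^sup>2 * (2 * ?s * d)"
    using pos by (intro mult_strict_left_mono) auto
  also have "\<dots> = 4 * ?s ^ 3 * d"
    by (simp add: power2_eq_square power3_eq_cube)
  finally have "(norm (S (S x) - ?s\<^sup>2 *\<^sub>R x))\<^sup>2 < e\<^sup>2"
    using norm_hermitian_square_diff_power2_le[OF bl herm x(1)] d_small by linarith
  then have "norm (S (S x) - ?s\<^sup>2 *\<^sub>R x) < e"
    using e by (simp add: power_less_imp_less_base)
  then show "\<exists>y. norm y = 1 \<and> norm (S (S y) - ?s\<^sup>2 *\<^sub>R y) < e"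
    using x(1) by blast
qed

lemma hermitian_op_approx_eigenvalue_onorm:
  fixes S :: "'a::chilbert \<Rightarrow> 'a"
  assumes bl: "bounded_linear S" and herm: "hermitian_op S" and pos: "0 < onorm S"
  obtains l where "\<bar>l\<bar> = onorm S" and "approx_eigenvalue S l"
  using approx_eigenvalue_of_square[OF bounded_linear.linear[OF bl]
      hermitian_op_approx_eigenvalue_square[OF assms]] pos
  by (metis abs_minus_cancel abs_of_pos)

section \<open>Distance of the spectrum from the origin\<close>

lemma surj_id_minus_contraction:
  fixes K :: "'a::{real_normed_vector, complete_space} \<Rightarrow> 'a"
  assumes lin: "linear K" and c: "0 \<le> c" "c < 1" and K: "\<And>w. norm (K w) \<le> c * norm w"
  shows "surj (\<lambda>w. w - K w)"
proof -
  have "\<exists>w. w - K w = y" for y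
  proof -
    have "\<exists>!w. y + K w = w"
    proof (rule banach_fix_type[OF c], intro allI)
      fix u v
      show "dist (y + K u) (y + K v) \<le> c * dist u v"
        using K[of "u - v"] lin by (simp add: dist_norm linear_diff)
    qed
    then show ?thesis
      by (metis add_diff_cancel_right')
  qed
  then show ?thesis
    by (metis surjI)
qed

lemma norm_diff_scaleC_ge:
  fixes S :: "'a::chilbert \<Rightarrow> 'a"
  assumes "bounded_linear S"
  shows "(1 - cmod z * onorm S) * norm w \<le> norm (w - z *\<^sub>C S w)"
proof -
  have "norm (z *\<^sub>C S w) \<le> cmod z * onorm S * norm w"
    using onorm[OF assms, of w] by (simp add: norm_scaleC mult.assoc mult_left_mono)
  then show ?thesis
    using norm_triangle_ineq2[of w "z *\<^sub>C S w"] by (simp add: algebra_simps)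
qed

lemma bij_betw_diff_scaleC_if_small:
  fixes T S :: "'a::chilbert \<Rightarrow> 'a"
  assumes inv: "two_sided_inverse_on D T S" and bl: "bounded_linear S"
    and z: "cmod z * onorm S < 1"
  shows "bij_betw (\<lambda>x. T x - z *\<^sub>C x) D UNIV"
proof -
  define N where "N w = w - z *\<^sub>C S w" for w
  have lin: "linear (\<lambda>w. z *\<^sub>C S w)"
    using linear_compose[OF bounded_linear.linear[OF bl] linear_scaleC_right]
    by (simp add: comp_def)
  have TN: "T x - z *\<^sub>C x = N (T x)" if "x \<in> D" for x
    using inv that by (simp add: N_def two_sided_inverse_on_def)
  have "inj_on (\<lambda>x. T x - z *\<^sub>C x) D"
  proof (rule inj_onI)
    fix x1 x2
    assume x: "x1 \<in> D" "x2 \<in> D" "T x1 - z *\<^sub>C x1 = T x2 - z *\<^sub>C x2"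
    have "N (T x1 - T x2) = N (T x1) - N (T x2)"
      using linear_diff[OF lin, of "T x1" "T x2"] by (simp add: N_def algebra_simps)
    also have "\<dots> = 0"
      using x by (simp flip: TN)
    finally have "(1 - cmod z * onorm S) * norm (T x1 - T x2) \<le> 0"
      using norm_diff_scaleC_ge[OF bl, of z "T x1 - T x2"] by (simp add: N_def)
    then have "T x1 = T x2"
      using z by (simp add: mult_le_0_iff)
    then show "x1 = x2"
      using inv x by (metis two_sided_inverse_on_def)
  qed
  moreover have "surj N"
    unfolding N_def
    using onorm_pos_le[OF bl] z onorm[OF bl]
    by (intro surj_id_minus_contraction[OF lin, of "cmod z * onorm S"])
      (simp_all add: norm_scaleC mult.assoc mult_left_mono)
  then have "range (\<lambda>w. T (S w) - z *\<^sub>C S w) = UNIV"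
    using inv by (simp add: N_def two_sided_inverse_on_def)
  then have "(\<lambda>x. T x - z *\<^sub>C x) ` D = UNIV"
    using inv unfolding two_sided_inverse_on_def by blast
  ultimately show ?thesis
    by (simp add: bij_betw_def)
qed

lemma in_resolvent_set_if_small:
  fixes T S :: "'a::chilbert \<Rightarrow> 'a"
  assumes lin: "clinear_on D T" and inv: "two_sided_inverse_on D T S"
    and bl: "bounded_linear S" and z: "cmod z * onorm S < 1"
  shows "z \<in> resolvent_set D T"
proof -
  define P where "P = (\<lambda>x. T x - z *\<^sub>C x)"
  have bij: "bij_betw P D UNIV"
    unfolding P_def by (rule bij_betw_diff_scaleC_if_small[OF inv bl z])
  have "norm (inv_into D P y) \<le> norm y * (onorm S / (1 - cmod z * onorm S))" for y
  proof -
    let ?x = "inv_into D P y"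
    have x: "?x \<in> D" "P ?x = y"
      using bij unfolding bij_betw_def by (metis UNIV_I inv_into_into f_inv_into_f)+
    then have "T ?x - z *\<^sub>C S (T ?x) = y"
      using inv by (simp add: P_def two_sided_inverse_on_def)
    then have Tx: "(1 - cmod z * onorm S) * norm (T ?x) \<le> norm y"
      using norm_diff_scaleC_ge[OF bl, of z "T ?x"] by simp
    have "norm ?x = norm (S (T ?x))"
      using inv x(1) by (simp add: two_sided_inverse_on_def)
    also have "\<dots> \<le> onorm S * norm (T ?x)"
      by (rule onorm[OF bl])
    also have "\<dots> \<le> onorm S * (norm y / (1 - cmod z * onorm S))"
      using Tx z onorm_pos_le[OF bl]
      by (intro mult_left_mono) (simp_all add: pos_le_divide_eq mult.commute)
    finally show ?thesis
      by (simp add: mult.commute)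
  qed
  moreover have "clinear_on UNIV (inv_into D P)"
    unfolding P_def using clinear_on_diff_scaleC[OF lin] bij[unfolded P_def]
    by (rule clinear_on_inv_into)
  ultimately have "bounded_clinear_op (inv_into D P)"
    unfolding bounded_clinear_op_def by blast
  with bij show ?thesis
    unfolding resolvent_set_def P_def by blast
qed

lemma inverse_approx_eigenvalue_in_spectrum_op:
  fixes T S :: "'a::chilbert \<Rightarrow> 'a"
  assumes inv: "two_sided_inverse_on D T S" and l: "approx_eigenvalue S l" "l \<noteq> 0"
  shows "complex_of_real (1 / l) \<in> spectrum_op D T"
  unfolding spectrum_op_def
proof
  define P where "P = (\<lambda>x. T x - (1 / l) *\<^sub>R x)"
  assume "complex_of_real (1 / l) \<in> resolvent_set D T"
  then have bij: "bij_betw P D UNIV" and "bounded_clinear_op (inv_into D P)"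
    unfolding resolvent_set_def P_def scaleR_scaleC by simp_all
  then obtain K where K: "\<And>y. norm (inv_into D P y) \<le> norm y * K"
    unfolding bounded_clinear_op_def by blast
  define e where "e = \<bar>l\<bar> / (1 + \<bar>K\<bar> / \<bar>l\<bar>)"
  have den: "0 < 1 + \<bar>K\<bar> / \<bar>l\<bar>"
    by (simp add: add_pos_nonneg)
  with l(2) have "0 < e"
    by (simp add: e_def)
  then obtain y where y: "norm y = 1" "norm (S y - l *\<^sub>R y) < e"
    using l(1) unfolding approx_eigenvalue_def by blast
  let ?v = "S y - l *\<^sub>R y"
  have "inv_into D P (P (S y)) = S y"
    using bij inv by (simp add: bij_betw_def two_sided_inverse_on_def inv_into_f_f)
  then have "norm (S y) \<le> norm (P (S y)) * K"
    using K by metis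
  also have "\<dots> \<le> norm (P (S y)) * \<bar>K\<bar>"
    by (simp add: mult_left_mono)
  also have "P (S y) = (- 1 / l) *\<^sub>R ?v"
    using inv l(2) by (simp add: P_def two_sided_inverse_on_def algebra_simps)
  finally have "norm (S y) \<le> norm ?v / \<bar>l\<bar> * \<bar>K\<bar>"
    by simp
  moreover have "\<bar>l\<bar> \<le> norm (S y) + norm ?v"
    using y(1) norm_triangle_ineq4[of "S y" ?v] by simp
  ultimately have "\<bar>l\<bar> \<le> norm ?v * (1 + \<bar>K\<bar> / \<bar>l\<bar>)"
    by (simp add: algebra_simps)
  also have "\<dots> < e * (1 + \<bar>K\<bar> / \<bar>l\<bar>)"
    using y(2) den by (rule mult_strict_right_mono)
  also have "\<dots> = \<bar>l\<bar>"
    using den by (simp add: e_def)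
  finally show False
    by simp
qed

lemma infdist_zero_spectrum_op_eq:
  fixes T S :: "'a::chilbert \<Rightarrow> 'a"
  assumes lin: "clinear_on D T" and inv: "two_sided_inverse_on D T S"
    and bl: "bounded_linear S" and herm: "hermitian_op S" and pos: "0 < onorm S"
  shows "infdist 0 (spectrum_op D T) = 1 / onorm S"
proof (rule antisym)
  obtain l where l: "\<bar>l\<bar> = onorm S" "approx_eigenvalue S l"
    using hermitian_op_approx_eigenvalue_onorm[OF bl herm pos] .
  then have l_spec: "complex_of_real (1 / l) \<in> spectrum_op D T"
    using inverse_approx_eigenvalue_in_spectrum_op[OF inv] pos by auto
  then show "infdist 0 (spectrum_op D T) \<le> 1 / onorm S"
    using infdist_le[OF l_spec, of 0] l(1) by (simp add: dist_norm norm_divide)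
  have "1 / onorm S \<le> cmod z" if "z \<in> spectrum_op D T" for z
  proof (rule ccontr)
    assume "\<not> 1 / onorm S \<le> cmod z"
    then have "cmod z * onorm S < 1"
      using pos by (auto simp: field_simps not_le)
    then have "z \<in> resolvent_set D T"
      by (rule in_resolvent_set_if_small[OF lin inv bl])
    with that show False
      by (simp add: spectrum_op_def)
  qed
  moreover have "spectrum_op D T \<noteq> {}"
    using l_spec by blast
  ultimately show "1 / onorm S \<le> infdist 0 (spectrum_op D T)"
    by (simp add: infdist_notempty dist_norm cINF_greatest)
qed

section \<open>Perturbations with \<open>B A\<^sup>-\<^sup>1 B = 0\<close>\<close>

lemma onorm_diff_scaleR_bounds:
  fixes f g :: "'a::real_normed_vector \<Rightarrow> 'b::real_normed_vector"
  assumes f: "bounded_linear f" and g: "bounded_linear g"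
  shows "\<bar>t\<bar> * onorm g - onorm f \<le> onorm (\<lambda>x. f x - t *\<^sub>R g x)"
    and "onorm (\<lambda>x. f x - t *\<^sub>R g x) \<le> \<bar>t\<bar> * onorm g + onorm f"
proof -
  have tg: "bounded_linear (\<lambda>x. t *\<^sub>R g x)"
    by (rule bounded_linear_compose[OF bounded_linear_scaleR_right g])
  have "onorm (\<lambda>x. f x + - (f x - t *\<^sub>R g x)) \<le> onorm f + onorm (\<lambda>x. - (f x - t *\<^sub>R g x))"
    by (intro onorm_triangle f bounded_linear_minus bounded_linear_sub tg)
  then show "\<bar>t\<bar> * onorm g - onorm f \<le> onorm (\<lambda>x. f x - t *\<^sub>R g x)"
    by (simp only: onorm_neg) (simp add: onorm_scaleR[OF g])
  have "onorm (\<lambda>x. f x + - (t *\<^sub>R g x)) \<le> onorm f + onorm (\<lambda>x. - (t *\<^sub>R g x))"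
    by (intro onorm_triangle f bounded_linear_minus tg)
  then show "onorm (\<lambda>x. f x - t *\<^sub>R g x) \<le> \<bar>t\<bar> * onorm g + onorm f"
    by (simp add: onorm_neg onorm_scaleR[OF g])
qed

lemma two_sided_inverse_on_add_nilpotent:
  fixes A B R :: "'a::real_vector \<Rightarrow> 'a"
  assumes inv: "two_sided_inverse_on D A R" and R: "linear R" and B: "linear B"
    and BRB: "\<And>x. B (R (B x)) = 0"
  shows "two_sided_inverse_on D (\<lambda>x. A x + t *\<^sub>R B x) (\<lambda>y. R y - t *\<^sub>R R (B (R y)))"
  unfolding two_sided_inverse_on_def
proof (intro conjI allI ballI)
  fix y
  let ?w = "y - t *\<^sub>R B (R y)"
  have Rw: "R ?w = R y - t *\<^sub>R R (B (R y))"
    using R by (simp add: linear_diff linear_scale)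
  then show "R y - t *\<^sub>R R (B (R y)) \<in> D"
    using inv by (metis two_sided_inverse_on_def)
  have "B (R ?w) = B (R y)"
    using R B BRB by (simp add: linear_diff linear_scale)
  then show "A (R y - t *\<^sub>R R (B (R y))) + t *\<^sub>R B (R y - t *\<^sub>R R (B (R y))) = y"
    using inv by (simp flip: Rw add: two_sided_inverse_on_def)
next
  fix x
  assume "x \<in> D"
  then have RT: "R (A x + t *\<^sub>R B x) = x + t *\<^sub>R R (B x)"
    using inv R by (simp add: two_sided_inverse_on_def linear_add linear_scale)
  have "R (B (x + t *\<^sub>R R (B x))) = R (B x)"
    using R B BRB by (simp add: linear_add linear_scale linear_0)
  then show "R (A x + t *\<^sub>R B x) - t *\<^sub>R R (B (R (A x + t *\<^sub>R B x))) = x"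
    by (simp add: RT)
qed

lemma sandwich_by_inverse_neq_zero:
  fixes A B R :: "'a::real_normed_vector \<Rightarrow> 'a"
  assumes inv: "two_sided_inverse_on D A R" and R: "linear R" and B: "bounded_linear B"
    and dense: "closure D = UNIV" and B_nz: "B \<noteq> (\<lambda>x. 0)"
  shows "R \<circ> B \<circ> R \<noteq> (\<lambda>x. 0)"
proof
  assume RBR: "R \<circ> B \<circ> R = (\<lambda>x. 0)"
  have "A 0 = 0"
    using inv linear_0[OF R] by (metis two_sided_inverse_on_def)
  then have "B x = 0" if "x \<in> D" for x
    using inv that fun_cong[OF RBR, of "A x"] by (metis comp_apply two_sided_inverse_on_def)
  then have "B x = 0" for x
    using dense continuous_constant_on_closure[OF linear_continuous_on[OF B]] by blast
  with B_nz show False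
    by auto
qed

lemma infdist_zero_spectrum_op_add_nilpotent:
  fixes A B :: "'a::chilbert \<Rightarrow> 'a" and t :: real
  assumes A_sa: "self_adjoint_op D A" and A_inv: "0 \<in> resolvent_set D A"
    and B_bdd: "bounded_clinear_op B" and B_sa: "self_adjoint_op UNIV B"
    and BRB: "\<And>x. B (inv_into D A (B x)) = 0"
  defines "S \<equiv> \<lambda>y. inv_into D A y - t *\<^sub>R inv_into D A (B (inv_into D A y))"
  assumes pos: "0 < onorm S"
  shows "infdist 0 (spectrum_op D (\<lambda>x. A x + complex_of_real t *\<^sub>C B x)) = 1 / onorm S"
proof (rule infdist_zero_spectrum_op_eq)
  let ?R = "inv_into D A"
  have invA: "two_sided_inverse_on D A ?R" and R: "bounded_linear ?R"
    using zero_in_resolvent_setD[OF A_inv] by simp_all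
  have B: "bounded_linear B"
    using B_bdd by (rule bounded_linear_if_bounded_clinear_op)
  show "clinear_on D (\<lambda>x. A x + complex_of_real t *\<^sub>C B x)"
    using A_sa B_bdd
    by (intro clinear_on_add_scaleC) (simp_all add: self_adjoint_op_def bounded_clinear_op_def)
  show "two_sided_inverse_on D (\<lambda>x. A x + complex_of_real t *\<^sub>C B x) S"
    using two_sided_inverse_on_add_nilpotent[OF invA bounded_linear.linear[OF R]
        bounded_linear.linear[OF B] BRB]
    by (simp add: S_def scaleR_scaleC)
  show "bounded_linear S"
    unfolding S_def
    by (intro bounded_linear_sub[OF R] bounded_linear_compose[OF bounded_linear_scaleR_right]
        bounded_linear_compose[OF R] bounded_linear_compose[OF B R])
  have "hermitian_op ?R" and "hermitian_op B"
    using hermitian_op_inverse_of_self_adjoint_op[OF A_sa invA]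
      hermitian_op_if_self_adjoint_op_UNIV[OF B_sa] .
  then show "hermitian_op S"
    unfolding S_def by (intro hermitian_op_diff hermitian_op_scaleR) (simp_all add: hermitian_op_def)
qed (rule pos)

theorem corollary2p3:
  fixes D :: "'a::chilbert set" and A B :: "'a \<Rightarrow> 'a"
  assumes A_sa: "self_adjoint_op D A"
    and B_bdd: "bounded_clinear_op B"
    and B_sa: "self_adjoint_op UNIV B"
    and B_nonneg: "\<forall>x. 0 \<le> Re (cinner x (B x))"
    and B_nz: "B \<noteq> (\<lambda>x. 0)"
    and A_inv: "0 \<in> resolvent_set D A"
    and BAB: "B \<circ> inv_into D A \<circ> B = (\<lambda>x. 0)"
  shows "inv_into D A \<circ> B \<circ> inv_into D A \<noteq> (\<lambda>x. 0) \<and>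
    (\<forall>t::real. \<bar>t\<bar> > onorm (inv_into D A) / onorm (inv_into D A \<circ> B \<circ> inv_into D A) \<longrightarrow>
      1 / (\<bar>t\<bar> * onorm (inv_into D A \<circ> B \<circ> inv_into D A) + onorm (inv_into D A))
        \<le> infdist 0 (spectrum_op D (\<lambda>x. A x + complex_of_real t *\<^sub>C B x)) \<and>
      infdist 0 (spectrum_op D (\<lambda>x. A x + complex_of_real t *\<^sub>C B x))
        \<le> 1 / (\<bar>t\<bar> * onorm (inv_into D A \<circ> B \<circ> inv_into D A) - onorm (inv_into D A)))"
proof -
  define R where "R = inv_into D A"
  define C where "C = R \<circ> B \<circ> R"
  have invA: "two_sided_inverse_on D A R" and R: "bounded_linear R"
    using zero_in_resolvent_setD[OF A_inv] by (simp_all add: R_def)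
  have B: "bounded_linear B"
    using B_bdd by (rule bounded_linear_if_bounded_clinear_op)
  have C: "bounded_linear C"
    unfolding C_def comp_def by (intro bounded_linear_compose[OF R] bounded_linear_compose[OF B R])
  have C_nz: "C \<noteq> (\<lambda>x. 0)"
    using sandwich_by_inverse_neq_zero[OF invA bounded_linear.linear[OF R] B _ B_nz] A_sa
    by (simp add: C_def self_adjoint_op_def)
  then have C_pos: "0 < onorm C"
    using onorm_pos_lt[OF C] by auto
  have BRB: "B (R (B x)) = 0" for x
    using fun_cong[OF BAB, of x] by (simp add: R_def)
  show ?thesis
  proof (intro conjI allI impI)
    show "inv_into D A \<circ> B \<circ> inv_into D A \<noteq> (\<lambda>x. 0)"
      using C_nz by (simp add: C_def R_def)
    fix t :: real
    assume "\<bar>t\<bar> > onorm (inv_into D A) / onorm (inv_into D A \<circ> B \<circ> inv_into D A)"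
    then have t: "onorm R < \<bar>t\<bar> * onorm C"
      using C_pos by (simp add: C_def R_def pos_divide_less_eq)
    define S where "S = (\<lambda>y. R y - t *\<^sub>R C y)"
    have S_bounds: "\<bar>t\<bar> * onorm C - onorm R \<le> onorm S" "onorm S \<le> \<bar>t\<bar> * onorm C + onorm R"
      unfolding S_def by (rule onorm_diff_scaleR_bounds[OF R C])+
    then have "infdist 0 (spectrum_op D (\<lambda>x. A x + complex_of_real t *\<^sub>C B x)) = 1 / onorm S"
      using infdist_zero_spectrum_op_add_nilpotent[OF A_sa A_inv B_bdd B_sa, of t] BRB t
      by (simp add: S_def C_def R_def)
    with S_bounds t show
      "1 / (\<bar>t\<bar> * onorm (inv_into D A \<circ> B \<circ> inv_into D A) + onorm (inv_into D A))
        \<le> infdist 0 (spectrum_op D (\<lambda>x. A x + complex_of_real t *\<^sub>C B x))"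
      "infdist 0 (spectrum_op D (\<lambda>x. A x + complex_of_real t *\<^sub>C B x))
        \<le> 1 / (\<bar>t\<bar> * onorm (inv_into D A \<circ> B \<circ> inv_into D A) - onorm (inv_into D A))"
      by (auto simp flip: C_def R_def intro: divide_left_mono)
  qed
qed

end
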